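(* Let $G=(V,E)$ be a Blowfish policy graph that is a tree with $V=\mathcal{T}\cup\{\bot\}$, $|\mathcal{T}|=k$, and let $\mathbf{P}_G$ be the matrix constructed from $G$ as described in the context (it is then a square invertible $k\times k$ matrix with inverse $\mathbf{P}_G^{-1}$). Then any pair of databases $\mathbf{y},\mathbf{z}\in\mathbb{R}^k$ are neighbors according to the Blowfish policy $G$ if and only if $\mathbf{P}_G^{-1}\mathbf{y}$ and $\mathbf{P}_G^{-1}\mathbf{z}$ are neighboring databases according to unbounded differential privacy, i.e. $\mathbf{P}_G^{-1}\mathbf{y}-\mathbf{P}_G^{-1}\mathbf{z}=\pm\mathbf{e}_i$ for some standard unit vector $\mathbf{e}_i$.
   Context: Construction of $\mathbf{P}_G$: rows indexed by $\mathcal{T}$, columns indexed by $E$; for an edge $(u,v)$ with $u,v\ne\bot$ the column has a $1$ in row $u$, a $-1$ in row $v$ and zeros elsewhere; for an edge $(u,\bot)$ the column has a $1$ in row $u$ and zeros elsewhere. Databases are histogram vectors in $\mathbb{R}^k$ indexed by $\mathcal{T}$. $\mathbf{y},\mathbf{z}$ are Blowfish neighbors under $G$ iff $\mathbf{y}-\mathbf{z}=\pm(\mathbf{e}_u-\mathbf{e}_v)$ for some edge $(u,v)\in E$ with $u,v\neq\bot$, or $\mathbf{y}-\mathbf{z}=\pm\mathbf{e}_u$ for some edge $(u,\bot)\in E$. *)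

theory Defs
  imports "HOL-Analysis.Analysis"
begin

(* Policy graph G = (V,E) with V = T \<union> {\<bottom>}: T is the finite type 'a, the vertex
   set is 'a option with None playing the role of \<bottom>.  Edges form the finite
   type 'e; edge e is the ordered pair (Some (src e), tgt e), i.e. (u,v) with
   u \<noteq> \<bottom>, and v = \<bottom> iff tgt e = None (edges to \<bottom> are written (u,\<bottom>) as in the
   paper). *)

definition edge_adj_without ::
  "('e \<Rightarrow> 'a) \<Rightarrow> ('e \<Rightarrow> 'a option) \<Rightarrow> 'e set \<Rightarrow> ('a option \<times> 'a option) set" where
  "edge_adj_without src tgt X =
     {(x, y). \<exists>e. e \<notin> X \<and> ((x = Some (src e) \<and> y = tgt e) \<or> (y = Some (src e) \<and> x = tgt e))}"

definition graph_connected :: "('e \<Rightarrow> 'a) \<Rightarrow> ('e \<Rightarrow> 'a option) \<Rightarrow> bool" where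
  "graph_connected src tgt \<longleftrightarrow> (\<forall>x y. (x, y) \<in> (edge_adj_without src tgt {})\<^sup>*)"

(* acyclic: no edge lies on a cycle, i.e. deleting any edge separates its endpoints
   (this also excludes loops and parallel edges) *)
definition graph_acyclic :: "('e \<Rightarrow> 'a) \<Rightarrow> ('e \<Rightarrow> 'a option) \<Rightarrow> bool" where
  "graph_acyclic src tgt \<longleftrightarrow>
     (\<forall>e. (Some (src e), tgt e) \<notin> (edge_adj_without src tgt {e})\<^sup>*)"

definition is_tree :: "('e \<Rightarrow> 'a) \<Rightarrow> ('e \<Rightarrow> 'a option) \<Rightarrow> bool" where
  "is_tree src tgt \<longleftrightarrow> graph_connected src tgt \<and> graph_acyclic src tgt"

definition PG :: "('e::finite \<Rightarrow> 'a::finite) \<Rightarrow> ('e \<Rightarrow> 'a option) \<Rightarrow> real ^ 'e ^ 'a" where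
  "PG src tgt = (\<chi> t e. (if src e = t then 1 else 0) - (if tgt e = Some t then 1 else 0))"

definition blowfish_neighbors ::
  "('e \<Rightarrow> 'a::finite) \<Rightarrow> ('e \<Rightarrow> 'a option) \<Rightarrow> real ^ 'a \<Rightarrow> real ^ 'a \<Rightarrow> bool" where
  "blowfish_neighbors src tgt y z \<longleftrightarrow>
     (\<exists>e. (\<exists>v. tgt e = Some v \<and>
              (y - z = axis (src e) 1 - axis v 1 \<or> y - z = -(axis (src e) 1 - axis v 1)))
        \<or> (tgt e = None \<and> (y - z = axis (src e) 1 \<or> y - z = - axis (src e) 1)))"

definition unbounded_dp_neighbors :: "real ^ 'n::finite \<Rightarrow> real ^ 'n \<Rightarrow> bool" where
  "unbounded_dp_neighbors x w \<longleftrightarrow> (\<exists>i. x - w = axis i 1 \<or> x - w = - axis i 1)"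

end

theory Submission
  imports Defs
begin

text \<open>
  Writing \<open>e\<^sub>\<bottom> = 0\<close>, the column of \<open>P\<^sub>G\<close> belonging to an edge \<open>(u,v)\<close> is \<open>e\<^sub>u - e\<^sub>v\<close>, so the
  columns are exactly the differences of Blowfish neighbours and it suffices to show that
  \<open>P\<^sub>G\<close> is invertible. Connectedness makes every \<open>e\<^sub>t = e\<^sub>t - e\<^sub>\<bottom>\<close> a telescoping sum of
  columns along a path from \<open>t\<close> to \<open>\<bottom>\<close>, so \<open>P\<^sub>G\<close> is onto. For injectivity let
  \<open>P\<^sub>G x = 0\<close> and let \<open>e\<close> be an edge. By acyclicity, deleting \<open>e\<close> separates its endpoints
  into two components, one of which, say \<open>S\<close>, avoids \<open>\<bottom>\<close>. Summing the rows of \<open>P\<^sub>G x\<close>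
  over \<open>S\<close> gives the net flow of \<open>x\<close> out of \<open>S\<close>, which is \<open>\<plusminus>x\<^sub>e\<close> since \<open>e\<close> is the only
  edge leaving \<open>S\<close>; hence \<open>x\<^sub>e = 0\<close>.
\<close>

definition vertex_vec :: "'a option \<Rightarrow> real ^ 'a::finite" where
  "vertex_vec x = (case x of None \<Rightarrow> 0 | Some t \<Rightarrow> axis t 1)"

lemma PG_mult_axis:
  fixes src :: "'e::finite \<Rightarrow> 'a::finite"
  shows "PG src tgt *v axis e 1 = vertex_vec (Some (src e)) - vertex_vec (tgt e)"
  unfolding matrix_vector_mult_basis
  by (auto simp: vec_eq_iff column_def PG_def vertex_vec_def axis_def split: option.splits)

lemma sym_edge_adj_without: "sym (edge_adj_without src tgt X)"
  unfolding edge_adj_without_def sym_def by blast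

lemma reachable_diff_in_range_PG:
  fixes src :: "'e::finite \<Rightarrow> 'a::finite"
  assumes "(x, y) \<in> (edge_adj_without src tgt {})\<^sup>*"
  shows "vertex_vec x - vertex_vec y \<in> range ((*v) (PG src tgt))"
  using assms
proof (induction rule: rtrancl_induct)
  case base
  show ?case by (metis diff_self matrix_vector_mult_0_right rangeI)
next
  case (step y z)
  then obtain w where w: "PG src tgt *v w = vertex_vec x - vertex_vec y" by auto
  from step.hyps(2) obtain e where
    "(y = Some (src e) \<and> z = tgt e) \<or> (z = Some (src e) \<and> y = tgt e)"
    unfolding edge_adj_without_def by blast
  then have "PG src tgt *v (w + axis e 1) = vertex_vec x - vertex_vec z \<or>
             PG src tgt *v (w - axis e 1) = vertex_vec x - vertex_vec z"
    by (auto simp: matrix_vector_right_distrib matrix_vector_mult_diff_distrib w PG_mult_axis)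
  then show ?case by (metis rangeI)
qed

lemma surj_PG:
  fixes src :: "'e::finite \<Rightarrow> 'a::finite"
  assumes "graph_connected src tgt"
  shows "surj ((*v) (PG src tgt))"
proof -
  have "axis t 1 \<in> range ((*v) (PG src tgt))" for t
  proof -
    have "(Some t, None) \<in> (edge_adj_without src tgt {})\<^sup>*"
      using assms unfolding graph_connected_def by blast
    from reachable_diff_in_range_PG[OF this] show ?thesis by (simp add: vertex_vec_def)
  qed
  then have "Basis \<subseteq> range ((*v) (PG src tgt))"
    by (auto simp: Basis_vec_def)
  moreover have "subspace (range ((*v) (PG src tgt)))"
    by (simp add: linear_subspace_image)
  ultimately have "span Basis \<subseteq> range ((*v) (PG src tgt))"
    by (rule span_minimal)
  then show ?thesis by auto
qed

lemma sum_PG_column: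
  fixes src :: "'e::finite \<Rightarrow> 'a::finite"
  assumes "None \<notin> S"
  shows "(\<Sum>t | Some t \<in> S. PG src tgt $ t $ f) =
     (if Some (src f) \<in> S then 1 else 0) - (if tgt f \<in> S then 1 else 0)"
  using assms
  by (cases "tgt f") (auto simp: PG_def sum_subtractf)

lemma sum_PG_mult_closed_set:
  fixes src :: "'e::finite \<Rightarrow> 'a::finite"
  assumes "None \<notin> S"
    and closed: "edge_adj_without src tgt {e} `` S \<subseteq> S"
  shows "(\<Sum>t | Some t \<in> S. (PG src tgt *v x) $ t) =
     x $ e * ((if Some (src e) \<in> S then 1 else 0) - (if tgt e \<in> S then 1 else 0))"
proof -
  define flow where
    "flow f = (if Some (src f) \<in> S then 1 else 0) - (if tgt f \<in> S then 1 else (0::real))" for f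
  have flow_other: "flow f = 0" if "f \<noteq> e" for f
  proof -
    have "(Some (src f), tgt f) \<in> edge_adj_without src tgt {e}"
         "(tgt f, Some (src f)) \<in> edge_adj_without src tgt {e}"
      using that unfolding edge_adj_without_def by blast+
    then have "Some (src f) \<in> S \<longleftrightarrow> tgt f \<in> S" using closed by blast
    then show ?thesis by (simp add: flow_def)
  qed
  have "(\<Sum>t | Some t \<in> S. (PG src tgt *v x) $ t) =
      (\<Sum>f\<in>UNIV. x $ f * (\<Sum>t | Some t \<in> S. PG src tgt $ t $ f))"
    unfolding matrix_vector_mult_def
    by (simp add: sum.swap[of _ "{t. Some t \<in> S}"] sum_distrib_left mult.commute)
  also have "\<dots> = (\<Sum>f\<in>UNIV. x $ f * flow f)"
    by (simp add: sum_PG_column[OF assms(1)] flow_def)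
  also have "\<dots> = x $ e * flow e"
    by (subst sum.remove[of _ e]) (auto simp: flow_other)
  finally show ?thesis by (simp add: flow_def)
qed

lemma inj_PG:
  fixes src :: "'e::finite \<Rightarrow> 'a::finite"
  assumes "graph_acyclic src tgt"
  shows "inj ((*v) (PG src tgt))"
  unfolding vec.inj_iff_eq_0
proof (intro allI impI)
  fix x assume x: "PG src tgt *v x = 0"
  have "x $ e = 0" for e
  proof -
    let ?R = "(edge_adj_without src tgt {e})\<^sup>*"
    have sep: "(Some (src e), tgt e) \<notin> ?R"
      using assms unfolding graph_acyclic_def by blast
    have sym_R: "sym ?R" by (rule sym_rtrancl[OF sym_edge_adj_without])
    have cut: "x $ e = 0"
      if "None \<notin> S" "Some (src e) \<in> S \<longleftrightarrow> tgt e \<notin> S"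
        and "edge_adj_without src tgt {e} `` S \<subseteq> S" for S
      using sum_PG_mult_closed_set[where S=S and src=src and tgt=tgt and e=e and x=x] that x
      by (auto split: if_splits)
    have component_closed: "edge_adj_without src tgt {e} `` (?R `` {u}) \<subseteq> ?R `` {u}" for u
      by (auto intro: rtrancl_into_rtrancl)
    have endpoints: "Some (src e) \<in> ?R `` {u} \<longleftrightarrow> tgt e \<notin> ?R `` {u}"
      if "u = Some (src e) \<or> u = tgt e" for u
      using that sep sym_R by (metis Image_singleton_iff rtrancl.rtrancl_refl symD)
    have "None \<notin> ?R `` {Some (src e)} \<or> None \<notin> ?R `` {tgt e}"
      using sep sym_R by (meson Image_singleton_iff rtrancl_trans symD)
    then show ?thesis
      by (elim disjE) (rule cut[OF _ endpoints component_closed], assumption, simp)+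
  qed
  then show "x = 0" by (simp add: vec_eq_iff)
qed

lemma invertible_PG:
  fixes src :: "'e::finite \<Rightarrow> 'a::finite"
  assumes "is_tree src tgt"
  shows "invertible (PG src tgt)"
  using assms inj_PG surj_PG unfolding is_tree_def invertible_eq_bij bij_def by blast

lemma blowfish_neighbors_iff_PG_column:
  fixes src :: "'e::finite \<Rightarrow> 'a::finite"
  shows "blowfish_neighbors src tgt y z \<longleftrightarrow>
    (\<exists>e. y - z = PG src tgt *v axis e 1 \<or> y - z = PG src tgt *v (- axis e 1))"
  unfolding blowfish_neighbors_def vec.neg PG_mult_axis
  by (intro ex_cong1) (auto simp: vertex_vec_def split: option.split)

lemma matrix_inv_mult:
  assumes "invertible A"
  shows "A ** matrix_inv A = mat 1" and "matrix_inv A ** A = mat 1"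
  using someI_ex[OF assms[unfolded invertible_def]] unfolding matrix_inv_def by auto

lemma matrix_inv_mult_vector_eq_iff:
  fixes A :: "'a::comm_semiring_1 ^ 'n ^ 'm"
  assumes "invertible A"
  shows "matrix_inv A *v y = x \<longleftrightarrow> y = A *v x"
  using matrix_inv_mult[OF assms]
  by (metis matrix_vector_mul_assoc matrix_vector_mul_lid)

theorem lemma4p8:
  fixes src :: "'e::finite \<Rightarrow> 'a::finite" and tgt :: "'e \<Rightarrow> 'a option"
  assumes "is_tree src tgt"
  shows "invertible (PG src tgt) \<and>
    (\<forall>y z :: real ^ 'a. blowfish_neighbors src tgt y z \<longleftrightarrow>
       unbounded_dp_neighbors (matrix_inv (PG src tgt) *v y) (matrix_inv (PG src tgt) *v z))"
proof (intro conjI allI)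
  show inv: "invertible (PG src tgt)"
    using assms by (rule invertible_PG)
  fix y z :: "real ^ 'a"
  have "matrix_inv (PG src tgt) *v y - matrix_inv (PG src tgt) *v z =
        matrix_inv (PG src tgt) *v (y - z)"
    by (simp add: matrix_vector_mult_diff_distrib)
  then show "blowfish_neighbors src tgt y z \<longleftrightarrow>
      unbounded_dp_neighbors (matrix_inv (PG src tgt) *v y) (matrix_inv (PG src tgt) *v z)"
    unfolding unbounded_dp_neighbors_def blowfish_neighbors_iff_PG_column
    by (simp add: matrix_inv_mult_vector_eq_iff[OF inv])
qed

end
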